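(* Let $H$ be an $m\times n$ binary parity-check matrix with Tanner graph $G$, and let $\underline x$ be a point of the fundamental polytope of $H$. Let $T\subseteq\{1,\dots,m\}$ be a collection of check nodes. If $T$ is a cut-generating collection at $\underline x$, then there exists a fractional cycle at $\underline x$ (a cycle in the fractional subgraph $F$) all of whose check nodes belong to $T$.
   Context: The Tanner graph $G$ of $H$ is the bipartite graph with variable nodes $1,\dots,n$, check nodes $1,\dots,m$, and an edge between check $j$ and variable $i$ iff $H_{ji}=1$; $N(j)$ is the set of variable nodes adjacent to check $j$. The fundamental polytope is the set of $\underline x\in[0,1]^n$ such that for every $j$ and every odd-sized $V\subseteq N(j)$, $\sum_{i\in V}x_i-\sum_{i\in N(j)\setminus V}x_i\le |V|-1$. For a parity check (binary vector) with neighborhood $N$, its constraints are $\sum_{i\in V}x_i-\sum_{i\in N\setminus V}x_i\le |V|-1$ for odd $V\subseteq N$, and it generates a cut at $\underline x$ if one of them is violated at $\underline x$. A set $T$ of check nodes is a cut-generating collection at $\underline x$ if the redundant parity check obtained as the modulo-2 sum of the rows of $H$ indexed by $T$ generates a cut at $\underline x$. The fractional subgraph $F$ at $\underline x$ is the subgraph of $G$ consisting of the variable nodes $i$ with $0<x_i<1$, the check nodes adjacent to them, and all edges between these nodes; a fractional cycle is a cycle in $F$. *)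

theory Defs
  imports Complex_Main
begin

text \<open>A binary m x n parity-check matrix H is represented as H :: nat => nat => bool,
  H j i meaning H_{ji} = 1, with check indices j < m and variable indices i < n
  (0-based). Points x are functions nat => real (only x 0..x (n-1) matter).\<close>

definition tanner_edge :: "(nat \<Rightarrow> nat \<Rightarrow> bool) \<Rightarrow> nat \<Rightarrow> nat \<Rightarrow> nat \<Rightarrow> nat \<Rightarrow> bool" where
  "tanner_edge H m n j i \<longleftrightarrow> j < m \<and> i < n \<and> H j i"

definition check_nbhd :: "(nat \<Rightarrow> nat \<Rightarrow> bool) \<Rightarrow> nat \<Rightarrow> nat \<Rightarrow> nat \<Rightarrow> nat set" where
  "check_nbhd H m n j = {i. tanner_edge H m n j i}"

definition parity_constraints_hold :: "nat set \<Rightarrow> (nat \<Rightarrow> real) \<Rightarrow> bool" where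
  "parity_constraints_hold N x \<longleftrightarrow>
     (\<forall>V. V \<subseteq> N \<and> odd (card V) \<longrightarrow>
        (\<Sum>i\<in>V. x i) - (\<Sum>i\<in>N - V. x i) \<le> real (card V) - 1)"

definition generates_cut :: "nat set \<Rightarrow> (nat \<Rightarrow> real) \<Rightarrow> bool" where
  "generates_cut N x \<longleftrightarrow>
     (\<exists>V. V \<subseteq> N \<and> odd (card V) \<and>
        (\<Sum>i\<in>V. x i) - (\<Sum>i\<in>N - V. x i) > real (card V) - 1)"

definition fundamental_polytope :: "(nat \<Rightarrow> nat \<Rightarrow> bool) \<Rightarrow> nat \<Rightarrow> nat \<Rightarrow> (nat \<Rightarrow> real) \<Rightarrow> bool" where
  "fundamental_polytope H m n x \<longleftrightarrow>
     (\<forall>i<n. 0 \<le> x i \<and> x i \<le> 1) \<and>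
     (\<forall>j<m. parity_constraints_hold (check_nbhd H m n j) x)"

text \<open>Neighbourhood of the redundant parity check obtained as the mod-2 sum of the rows in T:
  variable i is in it iff an odd number of rows j in T have H_{ji} = 1.\<close>
definition redundant_nbhd :: "(nat \<Rightarrow> nat \<Rightarrow> bool) \<Rightarrow> nat \<Rightarrow> nat \<Rightarrow> nat set \<Rightarrow> nat set" where
  "redundant_nbhd H m n T = {i. i < n \<and> odd (card {j \<in> T. tanner_edge H m n j i})}"

definition cut_generating_collection :: "(nat \<Rightarrow> nat \<Rightarrow> bool) \<Rightarrow> nat \<Rightarrow> nat \<Rightarrow> (nat \<Rightarrow> real) \<Rightarrow> nat set \<Rightarrow> bool" where
  "cut_generating_collection H m n x T \<longleftrightarrow> generates_cut (redundant_nbhd H m n T) x"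

definition fractional_var :: "nat \<Rightarrow> (nat \<Rightarrow> real) \<Rightarrow> nat \<Rightarrow> bool" where
  "fractional_var n x i \<longleftrightarrow> i < n \<and> 0 < x i \<and> x i < 1"

text \<open>A cycle in the fractional subgraph F: since the Tanner graph is bipartite, a cycle is
  c_0 - v_0 - c_1 - v_1 - ... - c_(k-1) - v_(k-1) - c_0 with k >= 2, distinct check nodes c_t,
  distinct variable nodes v_t, all of them in F (the variables fractional; check nodes are then
  in F since they are adjacent to a fractional variable), and all edges Tanner-graph edges.\<close>
definition fractional_cycle :: "(nat \<Rightarrow> nat \<Rightarrow> bool) \<Rightarrow> nat \<Rightarrow> nat \<Rightarrow> (nat \<Rightarrow> real)
    \<Rightarrow> nat list \<Rightarrow> nat list \<Rightarrow> bool" where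
  "fractional_cycle H m n x cs vs \<longleftrightarrow>
     length cs = length vs \<and> length cs \<ge> 2 \<and> distinct cs \<and> distinct vs \<and>
     (\<forall>t < length cs.
        fractional_var n x (vs ! t) \<and>
        tanner_edge H m n (cs ! t) (vs ! t) \<and>
        tanner_edge H m n (cs ! ((t + 1) mod length cs)) (vs ! t))"

end

theory Submission
  imports Defs
begin

text \<open>In distance form, the forbidden-set inequalities of a check say that the restriction of
  \<open>x\<close> to its neighbourhood has \<open>\<ell>\<^sub>1\<close>-distance at least 1 from every vertex of odd weight.
  Let two valid checks share at most one fractional variable. Their common coordinates can be
  rounded to two vertices of opposite parity at total distance at most 1; completing the two
  halves of an odd set of the sum of the checks by these roundings gives odd sets of both
  summands, so the sum is valid as well. If no fractional cycle has all its checks in \<open>T\<close>,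
  then every nonempty subset of \<open>T\<close> contains a check sharing at most one fractional variable
  with the other checks of the subset, since otherwise a non-backtracking walk through
  fractional variables would close a cycle. Peeling off such checks one at a time shows that
  the redundant check of \<open>T\<close> generates no cut.\<close>

definition vertex_dist :: "nat set \<Rightarrow> nat set \<Rightarrow> (nat \<Rightarrow> real) \<Rightarrow> real" where
  "vertex_dist N V x = (\<Sum>i\<in>N. if i \<in> V then 1 - x i else x i)"

lemma vertex_dist_eq:
  assumes "finite N" "V \<subseteq> N"
  shows "vertex_dist N V x = real (card V) - (\<Sum>i\<in>V. x i) + (\<Sum>i\<in>N - V. x i)"
proof -
  have "vertex_dist N V x = (\<Sum>i\<in>V. 1 - x i) + (\<Sum>i\<in>N - V. x i)"
    unfolding vertex_dist_def using assms
    by (simp add: sum.subset_diff[of V N] sum.If_cases Int_absorb1 Diff_eq)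
  then show ?thesis by (simp add: sum_subtractf)
qed

lemma parity_constraints_hold_iff_vertex_dist:
  assumes "finite N"
  shows "parity_constraints_hold N x \<longleftrightarrow> (\<forall>V. V \<subseteq> N \<and> odd (card V) \<longrightarrow> 1 \<le> vertex_dist N V x)"
  unfolding parity_constraints_hold_def using vertex_dist_eq[OF assms] by (smt (verit))

lemma vertex_dist_nonneg:
  assumes "\<forall>i\<in>N. 0 \<le> x i \<and> x i \<le> 1"
  shows "0 \<le> vertex_dist N V x"
  unfolding vertex_dist_def using assms by (intro sum_nonneg) auto

lemma vertex_dist_Un:
  assumes "finite A" "finite B" "A \<inter> B = {}"
  shows "vertex_dist (A \<union> B) V x = vertex_dist A V x + vertex_dist B V x"
  unfolding vertex_dist_def using assms by (rule sum.union_disjoint)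

lemma vertex_dist_cong:
  assumes "V \<inter> N = W \<inter> N"
  shows "vertex_dist N V x = vertex_dist N W x"
proof -
  have "i \<in> V \<longleftrightarrow> i \<in> W" if "i \<in> N" for i
    using assms that by blast
  then show ?thesis unfolding vertex_dist_def by (intro sum.cong) auto
qed

lemma vertex_dist_integral:
  assumes "\<forall>i\<in>C. x i = 0 \<or> x i = 1"
  shows "vertex_dist C {i \<in> C. x i = 1} x = 0"
  unfolding vertex_dist_def using assms by (intro sum.neutral) auto

lemma vertex_dist_one_fractional:
  assumes "finite C" "c \<in> C" "\<forall>i\<in>C - {c}. x i = 0 \<or> x i = 1"
  defines "W \<equiv> {i \<in> C - {c}. x i = 1}"
  shows "vertex_dist C W x + vertex_dist C (insert c W) x = 1"
proof -
  have split: "vertex_dist C V x = vertex_dist {c} V x + vertex_dist (C - {c}) V x" for V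
    using vertex_dist_Un[of "{c}" "C - {c}" V x] assms(1,2) by (simp add: insert_absorb)
  have "vertex_dist (C - {c}) (insert c W) x = vertex_dist (C - {c}) W x"
    by (rule vertex_dist_cong) blast
  moreover have "vertex_dist (C - {c}) W x = 0"
    unfolding W_def using vertex_dist_integral[OF assms(3)] .
  moreover have "c \<notin> W" unfolding W_def by blast
  ultimately show ?thesis
    using split[of W] split[of "insert c W"] by (simp add: vertex_dist_def)
qed

lemma vertex_dist_rounding:
  assumes "finite C" and bounds: "\<forall>i\<in>C. 0 \<le> x i \<and> x i \<le> 1"
    and one_fractional: "\<forall>u\<in>C. \<forall>w\<in>C. 0 < x u \<and> x u < 1 \<longrightarrow> 0 < x w \<and> x w < 1 \<longrightarrow> u = w"
  obtains (integral) W where "W \<subseteq> C" "vertex_dist C W x = 0"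
    | (fractional) W W' where "W \<subseteq> C" "W' \<subseteq> C" "odd (card W + card W')"
        "vertex_dist C W x + vertex_dist C W' x = 1"
proof (cases "\<exists>c\<in>C. 0 < x c \<and> x c < 1")
  case False
  have "x i = 0 \<or> x i = 1" if "i \<in> C" for i
  proof -
    have "\<not> (0 < x i \<and> x i < 1)" "0 \<le> x i \<and> x i \<le> 1" using False bounds that by blast+
    then show ?thesis by linarith
  qed
  then have "vertex_dist C {i \<in> C. x i = 1} x = 0" by (intro vertex_dist_integral) blast
  then show thesis by (rule integral[rotated]) blast
next
  case True
  then obtain c where c: "c \<in> C" "0 < x c" "x c < 1" by blast
  define W where "W = {i \<in> C - {c}. x i = 1}"
  have "x i = 0 \<or> x i = 1" if "i \<in> C - {c}" for i
  proof -
    have "\<not> (0 < x i \<and> x i < 1)" "0 \<le> x i \<and> x i \<le> 1" using one_fractional bounds c that by blast+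
    then show ?thesis by linarith
  qed
  then have "vertex_dist C W x + vertex_dist C (insert c W) x = 1"
    unfolding W_def using assms(1) c(1) by (intro vertex_dist_one_fractional) blast+
  moreover have "card (insert c W) = Suc (card W)"
    unfolding W_def using finite_subset[OF _ assms(1)] by simp
  moreover have "W \<subseteq> C" "insert c W \<subseteq> C" unfolding W_def using c(1) by blast+
  ultimately show thesis by (intro fractional[of W "insert c W"]) simp_all
qed

lemma vertex_dist_split_ge_one:
  assumes "parity_constraints_hold A x" "finite A"
    and "V \<inter> A \<inter> B = {}" "W \<subseteq> A \<inter> B" "odd (card (V \<inter> A) + card W)"
  shows "1 \<le> vertex_dist (A - B) V x + vertex_dist (A \<inter> B) W x"
proof -
  have "finite (V \<inter> A)" "finite W" using finite_subset[OF _ assms(2)] assms(4) by blast+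
  moreover have "V \<inter> A \<inter> W = {}" using assms(3,4) by blast
  ultimately have "odd (card (V \<inter> A \<union> W))" using assms(5) by (simp add: card_Un_disjoint)
  moreover have "V \<inter> A \<union> W \<subseteq> A" using assms(4) by blast
  ultimately have "1 \<le> vertex_dist A (V \<inter> A \<union> W) x"
    using assms(1,2) parity_constraints_hold_iff_vertex_dist by blast
  also have "\<dots> = vertex_dist (A - B) (V \<inter> A \<union> W) x + vertex_dist (A \<inter> B) (V \<inter> A \<union> W) x"
  proof -
    have "vertex_dist ((A - B) \<union> (A \<inter> B)) (V \<inter> A \<union> W) x
        = vertex_dist (A - B) (V \<inter> A \<union> W) x + vertex_dist (A \<inter> B) (V \<inter> A \<union> W) x"
      using assms(2) by (intro vertex_dist_Un) auto
    moreover have "(A - B) \<union> (A \<inter> B) = A" by blast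
    ultimately show ?thesis by simp
  qed
  also have "vertex_dist (A - B) (V \<inter> A \<union> W) x = vertex_dist (A - B) V x"
    using assms(4) by (intro vertex_dist_cong) blast
  also have "vertex_dist (A \<inter> B) (V \<inter> A \<union> W) x = vertex_dist (A \<inter> B) W x"
    using assms(3) by (intro vertex_dist_cong) blast
  finally show ?thesis .
qed

lemma parity_constraints_hold_symmetric_difference:
  assumes fin: "finite A" "finite B"
    and bounds: "\<forall>i\<in>A \<union> B. 0 \<le> x i \<and> x i \<le> 1"
    and valid: "parity_constraints_hold A x" "parity_constraints_hold B x"
    and one_fractional: "\<forall>u\<in>A \<inter> B. \<forall>w\<in>A \<inter> B. 0 < x u \<and> x u < 1 \<longrightarrow> 0 < x w \<and> x w < 1 \<longrightarrow> u = w"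
  shows "parity_constraints_hold (sym_diff A B) x"
proof -
  let ?C = "A \<inter> B"
  have "1 \<le> vertex_dist (sym_diff A B) V x"
    if V: "V \<subseteq> sym_diff A B" "odd (card V)" for V
  proof -
    define a where "a = vertex_dist (A - B) V x"
    define b where "b = vertex_dist (B - A) V x"
    have "0 \<le> a" "0 \<le> b"
      unfolding a_def b_def using bounds by (auto intro: vertex_dist_nonneg)
    have dist_V: "vertex_dist (sym_diff A B) V x = a + b"
      unfolding a_def b_def using fin by (intro vertex_dist_Un) auto
    have bound_A: "1 \<le> a + vertex_dist ?C W x" if "W \<subseteq> ?C" "odd (card (V \<inter> A) + card W)" for W
      unfolding a_def using vertex_dist_split_ge_one[OF valid(1) fin(1)] V(1) that by blast
    have bound_B: "1 \<le> b + vertex_dist ?C W x" if "W \<subseteq> ?C" "odd (card (V \<inter> B) + card W)" for W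
    proof -
      have "V \<inter> B \<inter> A = {}" "W \<subseteq> B \<inter> A" using V(1) that(1) by blast+
      from vertex_dist_split_ge_one[OF valid(2) fin(2) this that(2)]
      show ?thesis unfolding b_def by (simp only: Int_commute[of B A])
    qed
    have "card (V \<inter> A) + card (V \<inter> B) = card V"
    proof -
      have "V = (V \<inter> A) \<union> (V \<inter> B)" "(V \<inter> A) \<inter> (V \<inter> B) = {}" using V by auto
      moreover have "finite V" using finite_subset[OF V(1)] fin by simp
      ultimately show ?thesis by (metis card_Un_disjoint finite_Int)
    qed
    then have parity: "odd (card (V \<inter> A) + card W) \<longleftrightarrow> even (card (V \<inter> B) + card W)" for W
      using V(2) by presburger
    have "finite ?C" "\<forall>i\<in>?C. 0 \<le> x i \<and> x i \<le> 1" using fin bounds by auto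
    then show ?thesis
    proof (rule vertex_dist_rounding[OF _ _ one_fractional])
      fix W assume integral: "W \<subseteq> ?C" "vertex_dist ?C W x = 0"
      show ?thesis
      proof (cases "odd (card (V \<inter> A) + card W)")
        case True
        then show ?thesis using bound_A[of W] integral dist_V \<open>0 \<le> b\<close> by simp
      next
        case False
        then show ?thesis using bound_B[of W] parity[of W] integral dist_V \<open>0 \<le> a\<close> by simp
      qed
    next
      fix W W' assume fractional: "W \<subseteq> ?C" "W' \<subseteq> ?C" "odd (card W + card W')"
        "vertex_dist ?C W x + vertex_dist ?C W' x = 1"
      show ?thesis
      proof (cases "odd (card (V \<inter> A) + card W)")
        case True
        then have "odd (card (V \<inter> B) + card W')" using parity[of W] fractional(3) by presburger
        then show ?thesis using bound_A[of W] bound_B[of W'] True fractional dist_V by simp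
      next
        case False
        then have "odd (card (V \<inter> A) + card W')" "odd (card (V \<inter> B) + card W)"
          using parity[of W] fractional(3) by presburger+
        then show ?thesis using bound_A[of W'] bound_B[of W] fractional dist_V by simp
      qed
    qed
  qed
  then show ?thesis
    using fin parity_constraints_hold_iff_vertex_dist by auto
qed

definition shared_fractional_var ::
    "(nat \<Rightarrow> nat \<Rightarrow> bool) \<Rightarrow> nat \<Rightarrow> nat \<Rightarrow> (nat \<Rightarrow> real) \<Rightarrow> nat set \<Rightarrow> nat \<Rightarrow> nat \<Rightarrow> bool" where
  "shared_fractional_var H m n x T j i \<longleftrightarrow>
     fractional_var n x i \<and> tanner_edge H m n j i \<and> (\<exists>j'\<in>T - {j}. tanner_edge H m n j' i)"

lemma check_nbhd_subset: "check_nbhd H m n j \<subseteq> {..<n}"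
  unfolding check_nbhd_def tanner_edge_def by auto

lemma redundant_nbhd_subset: "redundant_nbhd H m n T \<subseteq> {..<n}"
  unfolding redundant_nbhd_def by auto

lemma redundant_nbhd_empty [simp]: "redundant_nbhd H m n {} = {}"
  unfolding redundant_nbhd_def by simp

lemma redundant_nbhd_insert:
  assumes "finite T" "j \<notin> T"
  shows "redundant_nbhd H m n (insert j T) = sym_diff (check_nbhd H m n j) (redundant_nbhd H m n T)"
proof -
  have "odd (card {j' \<in> insert j T. tanner_edge H m n j' i}) \<longleftrightarrow>
      (tanner_edge H m n j i \<longleftrightarrow> even (card {j' \<in> T. tanner_edge H m n j' i}))" for i
  proof (cases "tanner_edge H m n j i")
    case True
    then have "{j' \<in> insert j T. tanner_edge H m n j' i} = insert j {j' \<in> T. tanner_edge H m n j' i}"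
      by auto
    then show ?thesis using True assms by simp
  next
    case False
    then have "{j' \<in> insert j T. tanner_edge H m n j' i} = {j' \<in> T. tanner_edge H m n j' i}"
      by auto
    then show ?thesis using False by simp
  qed
  then show ?thesis
    unfolding redundant_nbhd_def check_nbhd_def tanner_edge_def by auto
qed

lemma check_nbhd_parity_constraints_hold:
  assumes "fundamental_polytope H m n x"
  shows "parity_constraints_hold (check_nbhd H m n j) x"
proof (cases "j < m")
  case True
  then show ?thesis using assms unfolding fundamental_polytope_def by blast
next
  case False
  then have "check_nbhd H m n j = {}" unfolding check_nbhd_def tanner_edge_def by simp
  then show ?thesis unfolding parity_constraints_hold_def by simp
qed

lemma shared_fractional_var_if_in_redundant_nbhd:
  assumes "i \<in> check_nbhd H m n j \<inter> redundant_nbhd H m n (T - {j})" "fractional_var n x i"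
  shows "shared_fractional_var H m n x T j i"
proof -
  have "odd (card {j' \<in> T - {j}. tanner_edge H m n j' i})"
    using assms(1) unfolding redundant_nbhd_def by blast
  then have "{j' \<in> T - {j}. tanner_edge H m n j' i} \<noteq> {}"
    by (metis card.empty even_zero)
  then show ?thesis
    using assms unfolding shared_fractional_var_def check_nbhd_def by blast
qed

lemma first_repeat_interleaved:
  fixes c :: "nat \<Rightarrow> 'a" and v :: "nat \<Rightarrow> 'b"
  assumes "finite (range c)"
  obtains (left) a b where "a < b" "c a = c b" "inj_on c {..<b}" "inj_on v {..<b}"
    | (right) a b where "a < b" "v a = v b" "inj_on c {..b}" "inj_on v {..<b}"
proof -
  let ?repeat = "\<lambda>b. \<exists>a<b. c a = c b \<or> v a = v b"
  have "\<not> inj c" using assms finite_imageD infinite_UNIV_nat by blast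
  then obtain p q where "p \<noteq> q" "c p = c q" unfolding inj_def by blast
  then have "\<exists>b. ?repeat b" by (metis linorder_neqE_nat)
  define b where "b = (LEAST b. ?repeat b)"
  have "?repeat b" unfolding b_def using \<open>\<exists>b. ?repeat b\<close> by (rule LeastI_ex)
  have "\<not> ?repeat b'" if "b' < b" for b'
    using that unfolding b_def by (rule not_less_Least)
  then have inj: "inj_on c {..<b}" "inj_on v {..<b}"
    by (auto intro!: linorder_inj_onI')
  show thesis
  proof (cases "\<exists>a<b. c a = c b")
    case True
    then show thesis using left inj by blast
  next
    case False
    then have "inj_on c (insert b {..<b})" using inj(1) by auto
    moreover have "insert b {..<b} = {..b}" by auto
    moreover obtain a where "a < b" "v a = v b" using False \<open>?repeat b\<close> by blast
    ultimately show thesis using right inj(2) by auto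
  qed
qed

lemma fractional_cycle_of_walk_segment:
  assumes walk: "\<And>t. fractional_var n x (v t) \<and> tanner_edge H m n (c t) (v t) \<and> tanner_edge H m n (c (Suc t)) (v t)"
    and "a + 2 \<le> b" "inj_on c {a..<b}" "inj_on v {a..<b}"
    and closing: "tanner_edge H m n (c a) (v (b - 1))"
  shows "fractional_cycle H m n x (map c [a..<b]) (map v [a..<b])"
  unfolding fractional_cycle_def
proof (intro conjI allI impI)
  fix t assume "t < length (map c [a..<b])"
  then have t: "t < b - a" by simp
  then show "fractional_var n x (map v [a..<b] ! t)" "tanner_edge H m n (map c [a..<b] ! t) (map v [a..<b] ! t)"
    using walk[of "a + t"] by auto
  show "tanner_edge H m n (map c [a..<b] ! ((t + 1) mod length (map c [a..<b]))) (map v [a..<b] ! t)"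
  proof (cases "t + 1 < b - a")
    case True
    then show ?thesis using walk[of "a + t"] by simp
  next
    case False
    then have "t = b - a - 1" "t + 1 = b - a" using t by auto
    then show ?thesis using closing assms(2) by simp
  qed
qed (use assms in \<open>auto simp: distinct_map\<close>)

lemma fractional_cycle_of_non_backtracking_walk:
  assumes walk: "\<And>t. fractional_var n x (v t) \<and> tanner_edge H m n (c t) (v t) \<and> tanner_edge H m n (c (Suc t)) (v t)"
    and non_backtracking: "\<And>t. c (Suc t) \<noteq> c t \<and> v (Suc t) \<noteq> v t"
  shows "\<exists>cs vs. fractional_cycle H m n x cs vs \<and> set cs \<subseteq> range c"
proof -
  have "range c \<subseteq> {..<m}" using walk unfolding tanner_edge_def by blast
  then have "finite (range c)" using finite_subset[OF _ finite_lessThan] by blast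
  then show ?thesis
  proof (cases rule: first_repeat_interleaved[where v = v])
    case (left a b)
    have "Suc a \<noteq> b" using left non_backtracking[of a] by auto
    then have "a + 2 \<le> b" using left(1) by linarith
    moreover have "tanner_edge H m n (c a) (v (b - 1))"
      using walk[of "b - 1"] left by simp
    moreover have "inj_on c {a..<b}" "inj_on v {a..<b}"
      using left(3,4) by (auto elim: inj_on_subset)
    ultimately have "fractional_cycle H m n x (map c [a..<b]) (map v [a..<b])"
      using walk by (intro fractional_cycle_of_walk_segment)
    moreover have "set (map c [a..<b]) \<subseteq> range c" by auto
    ultimately show ?thesis by blast
  next
    case (right a b)
    have "Suc a \<noteq> b" using right non_backtracking[of a] by auto
    then have "Suc a + 2 \<le> Suc b" using right(1) by linarith
    moreover have "tanner_edge H m n (c (Suc a)) (v (Suc b - 1))"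
      using walk[of a] right by simp
    moreover have "inj_on c {Suc a..<Suc b}" using right(3) by (rule inj_on_subset) auto
    moreover have "inj_on v {Suc a..<Suc b}"
    proof -
      have "v b \<notin> v ` {Suc a..<b}"
      proof
        assume "v b \<in> v ` {Suc a..<b}"
        then obtain t where "Suc a \<le> t" "t < b" "v t = v a" using right(2) by auto
        then show False using inj_onD[OF right(4), of t a] right(1) by auto
      qed
      moreover have "inj_on v {Suc a..<b}" using right(4) by (rule inj_on_subset) auto
      moreover have "{Suc a..<Suc b} = insert b {Suc a..<b}" using right(1) by auto
      ultimately show ?thesis by simp
    qed
    ultimately have "fractional_cycle H m n x (map c [Suc a..<Suc b]) (map v [Suc a..<Suc b])"
      using walk by (intro fractional_cycle_of_walk_segment)
    moreover have "set (map c [Suc a..<Suc b]) \<subseteq> range c" by auto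
    ultimately show ?thesis by blast
  qed
qed

lemma fractional_cycle_if_all_checks_branch:
  assumes "T \<noteq> {}"
    and branching: "\<forall>j\<in>T. \<exists>i i'. i \<noteq> i' \<and> shared_fractional_var H m n x T j i \<and> shared_fractional_var H m n x T j i'"
  shows "\<exists>cs vs. fractional_cycle H m n x cs vs \<and> set cs \<subseteq> T"
proof -
  let ?S = "shared_fractional_var H m n x T"
  define P where "P k p \<longleftrightarrow> fst p \<in> T \<and> ?S (fst p) (snd p)" for k :: nat and p
  define Q where "Q k p p' \<longleftrightarrow> fst p' \<noteq> fst p \<and> snd p' \<noteq> snd p \<and> tanner_edge H m n (fst p') (snd p)"
    for k :: nat and p p'
  have "\<exists>p. P 0 p" unfolding P_def using assms by fastforce
  moreover have "\<exists>p'. P (Suc k) p' \<and> Q k p p'" if p: "P k p" for k p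
  proof -
    obtain j' where j': "j' \<in> T" "j' \<noteq> fst p" "tanner_edge H m n j' (snd p)"
      using p unfolding P_def shared_fractional_var_def by blast
    then obtain i' where "?S j' i'" "i' \<noteq> snd p" using branching by metis
    then show ?thesis using j' unfolding P_def Q_def by (intro exI[of _ "(j', i')"]) simp
  qed
  ultimately obtain f where f: "\<forall>k. P k (f k) \<and> Q k (f k) (f (Suc k))"
    using dependent_nat_choice[of P Q] by blast
  have "\<exists>cs vs. fractional_cycle H m n x cs vs \<and> set cs \<subseteq> range (fst \<circ> f)"
  proof (rule fractional_cycle_of_non_backtracking_walk)
    fix t
    show "fractional_var n x ((snd \<circ> f) t) \<and> tanner_edge H m n ((fst \<circ> f) t) ((snd \<circ> f) t)
        \<and> tanner_edge H m n ((fst \<circ> f) (Suc t)) ((snd \<circ> f) t)"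
      using f unfolding P_def Q_def shared_fractional_var_def by simp
    show "(fst \<circ> f) (Suc t) \<noteq> (fst \<circ> f) t \<and> (snd \<circ> f) (Suc t) \<noteq> (snd \<circ> f) t"
      using f unfolding Q_def by simp
  qed
  moreover have "range (fst \<circ> f) \<subseteq> T" using f unfolding P_def by auto
  ultimately show ?thesis by blast
qed

lemma redundant_nbhd_parity_constraints_hold:
  assumes polytope: "fundamental_polytope H m n x" and "finite T"
    and "\<nexists>cs vs. fractional_cycle H m n x cs vs \<and> set cs \<subseteq> T"
  shows "parity_constraints_hold (redundant_nbhd H m n T) x"
  using assms(2,3)
proof (induction T rule: finite_remove_induct)
  case empty
  show ?case by (simp add: parity_constraints_hold_def)
next
  case (remove T)
  let ?S = "shared_fractional_var H m n x T"
  have "\<not> (\<forall>j\<in>T. \<exists>i i'. i \<noteq> i' \<and> ?S j i \<and> ?S j i')"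
    using fractional_cycle_if_all_checks_branch[of T H m n x] remove.hyps(2) remove.prems by blast
  then obtain j where "j \<in> T" and leaf: "\<forall>i i'. ?S j i \<and> ?S j i' \<longrightarrow> i = i'"
    by blast
  let ?A = "check_nbhd H m n j" and ?B = "redundant_nbhd H m n (T - {j})"
  have "T = insert j (T - {j})" using \<open>j \<in> T\<close> by blast
  then have "redundant_nbhd H m n T = sym_diff ?A ?B"
    using redundant_nbhd_insert[of "T - {j}" j H m n] remove.hyps(1) by simp
  moreover have "parity_constraints_hold (sym_diff ?A ?B) x"
  proof (rule parity_constraints_hold_symmetric_difference)
    show "finite ?A" "finite ?B"
      using finite_subset[OF check_nbhd_subset] finite_subset[OF redundant_nbhd_subset] by simp_all
    show "\<forall>i\<in>?A \<union> ?B. 0 \<le> x i \<and> x i \<le> 1"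
      using polytope check_nbhd_subset redundant_nbhd_subset unfolding fundamental_polytope_def by blast
    show "parity_constraints_hold ?A x"
      using polytope by (rule check_nbhd_parity_constraints_hold)
    show "parity_constraints_hold ?B x"
      using remove.IH[OF \<open>j \<in> T\<close>] remove.prems by blast
    show "\<forall>u\<in>?A \<inter> ?B. \<forall>w\<in>?A \<inter> ?B. 0 < x u \<and> x u < 1 \<longrightarrow> 0 < x w \<and> x w < 1 \<longrightarrow> u = w"
      using leaf shared_fractional_var_if_in_redundant_nbhd check_nbhd_subset
      unfolding fractional_var_def by blast
  qed
  ultimately show ?case by simp
qed

theorem theorem3:
  fixes H :: "nat \<Rightarrow> nat \<Rightarrow> bool" and m n :: nat and x :: "nat \<Rightarrow> real" and T :: "nat set"
  assumes "fundamental_polytope H m n x"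
    and "T \<subseteq> {..<m}"
    and "cut_generating_collection H m n x T"
  shows "\<exists>cs vs. fractional_cycle H m n x cs vs \<and> set cs \<subseteq> T"
proof (rule ccontr)
  assume "\<not> ?thesis"
  moreover have "finite T" using finite_subset[OF assms(2)] by simp
  ultimately have "parity_constraints_hold (redundant_nbhd H m n T) x"
    using redundant_nbhd_parity_constraints_hold assms(1) by blast
  then show False
    using assms(3) unfolding cut_generating_collection_def generates_cut_def parity_constraints_hold_def
    by (meson not_le)
qed

end
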